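(* Let $X$ be an irreducible affine variety over an algebraically closed field $\mathbb{K}$ of characteristic zero, and let $U\subseteq \mathbb{K}[X]$ be a linear subspace which is invariant under all regular automorphisms of $X$. Then $\partial(U)\subseteq U$ for every locally nilpotent derivation $\partial$ of $\mathbb{K}[X]$. Moreover, if $\mathbb{K}[X]=\bigoplus_{i\in\mathbb{Z}}\mathbb{K}[X]_i$ is a $\mathbb{Z}$-graded algebra, then $U=\bigoplus_{i\in\mathbb{Z}}\bigl(U\cap \mathbb{K}[X]_i\bigr)$.
   Context: A derivation $\partial$ of $\mathbb{K}[X]$ (a $\mathbb{K}$-linear map with $\partial(ab)=a\partial(b)+b\partial(a)$) is locally nilpotent if for every $a$ there is $n$ with $\partial^n(a)=0$. Automorphisms of $X$ act on $\mathbb{K}[X]$ by pullback. *)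

theory Defs
  imports "HOL-Computational_Algebra.Polynomial"
begin

text \<open>The coordinate ring K[X] is modelled as a commutative domain 'b together with
  a ring homomorphism emb : K -> K[X] (structure map of the K-algebra).\<close>

definition alg_closed_field :: "('a::field) itself \<Rightarrow> bool" where
  "alg_closed_field _ \<longleftrightarrow> (\<forall>p :: 'a poly. degree p > 0 \<longrightarrow> (\<exists>x. poly p x = 0))"

definition structure_map :: "('a::field \<Rightarrow> 'b::idom) \<Rightarrow> bool" where
  "structure_map emb \<longleftrightarrow> emb 1 = 1 \<and> (\<forall>x y. emb (x + y) = emb x + emb y)
      \<and> (\<forall>x y. emb (x * y) = emb x * emb y)"

inductive_set subalg_gen :: "('a::field \<Rightarrow> 'b::idom) \<Rightarrow> 'b set \<Rightarrow> 'b set"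
  for emb :: "'a \<Rightarrow> 'b" and S :: "'b set" where
  scal: "emb c \<in> subalg_gen emb S"
| gen: "s \<in> S \<Longrightarrow> s \<in> subalg_gen emb S"
| add: "x \<in> subalg_gen emb S \<Longrightarrow> y \<in> subalg_gen emb S \<Longrightarrow> x + y \<in> subalg_gen emb S"
| mult: "x \<in> subalg_gen emb S \<Longrightarrow> y \<in> subalg_gen emb S \<Longrightarrow> x * y \<in> subalg_gen emb S"

definition finitely_generated_alg :: "('a::field \<Rightarrow> 'b::idom) \<Rightarrow> bool" where
  "finitely_generated_alg emb \<longleftrightarrow> (\<exists>S. finite S \<and> subalg_gen emb S = UNIV)"

definition lin_subspace :: "('a::field \<Rightarrow> 'b::idom) \<Rightarrow> 'b set \<Rightarrow> bool" where
  "lin_subspace emb U \<longleftrightarrow> 0 \<in> U \<and> (\<forall>x\<in>U. \<forall>y\<in>U. x + y \<in> U)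
      \<and> (\<forall>c. \<forall>x\<in>U. emb c * x \<in> U)"

definition lin_map :: "('a::field \<Rightarrow> 'b::idom) \<Rightarrow> ('b \<Rightarrow> 'b) \<Rightarrow> bool" where
  "lin_map emb f \<longleftrightarrow> (\<forall>x y. f (x + y) = f x + f y) \<and> (\<forall>c x. f (emb c * x) = emb c * f x)"

text \<open>K-algebra automorphisms of K[X]; these are exactly the pullbacks of the
  regular automorphisms of X.\<close>
definition alg_aut :: "('a::field \<Rightarrow> 'b::idom) \<Rightarrow> ('b \<Rightarrow> 'b) \<Rightarrow> bool" where
  "alg_aut emb \<phi> \<longleftrightarrow> bij \<phi> \<and> lin_map emb \<phi> \<and> (\<forall>x y. \<phi> (x * y) = \<phi> x * \<phi> y) \<and> \<phi> 1 = 1"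

definition derivation :: "('a::field \<Rightarrow> 'b::idom) \<Rightarrow> ('b \<Rightarrow> 'b) \<Rightarrow> bool" where
  "derivation emb D \<longleftrightarrow> lin_map emb D \<and> (\<forall>a b. D (a * b) = a * D b + b * D a)"

definition locally_nilpotent :: "('b \<Rightarrow> 'b::idom) \<Rightarrow> bool" where
  "locally_nilpotent D \<longleftrightarrow> (\<forall>a. \<exists>n. (D ^^ n) a = 0)"

definition internal_direct_sum :: "'b::comm_monoid_add set \<Rightarrow> (int \<Rightarrow> 'b set) \<Rightarrow> bool" where
  "internal_direct_sum V B \<longleftrightarrow>
     (\<forall>v. v \<in> V \<longleftrightarrow> (\<exists>f. finite {i. f i \<noteq> 0} \<and> (\<forall>i. f i \<in> B i) \<and> v = (\<Sum>i\<in>{i. f i \<noteq> 0}. f i)))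
   \<and> (\<forall>f g. finite {i. f i \<noteq> 0} \<and> finite {i. g i \<noteq> 0} \<and> (\<forall>i. f i \<in> B i) \<and> (\<forall>i. g i \<in> B i)
        \<and> (\<Sum>i\<in>{i. f i \<noteq> 0}. f i) = (\<Sum>i\<in>{i. g i \<noteq> 0}. g i) \<longrightarrow> f = g)"

definition Z_graded_alg :: "('a::field \<Rightarrow> 'b::idom) \<Rightarrow> (int \<Rightarrow> 'b set) \<Rightarrow> bool" where
  "Z_graded_alg emb A \<longleftrightarrow> (\<forall>i. lin_subspace emb (A i))
     \<and> (\<forall>i j. \<forall>x\<in>A i. \<forall>y\<in>A j. x * y \<in> A (i + j))
     \<and> internal_direct_sum UNIV A"

end

theory Submission
  imports Defs
begin

text \<open>
  For a locally nilpotent derivation \<open>D\<close> the exponential \<open>exp (t D) = \<Sum>\<^sub>k t\<^sup>k D\<^sup>k / k!\<close>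
  is a finite sum; it is multiplicative by the Leibniz rule and inverted by \<open>exp (-t D)\<close>, so
  it is an algebra automorphism for every \<open>t \<in> K\<close>.  For \<open>u \<in> U\<close> the polynomial
  \<open>t \<mapsto> \<Sum>\<^sub>k t\<^sup>k D\<^sup>k u / k!\<close> therefore takes all its values in \<open>U\<close>; as \<open>K\<close> is infinite,
  its coefficients, in particular \<open>D u\<close>, lie in \<open>U\<close>.  For a \<open>\<int>\<close>-grading, the map
  \<open>x \<mapsto> \<Sum>\<^sub>i \<lambda>\<^sup>i x\<^sub>i\<close> is an automorphism for every \<open>\<lambda> \<noteq> 0\<close>, and the same argument applied to the
  Laurent polynomial \<open>\<lambda> \<mapsto> \<Sum>\<^sub>i \<lambda>\<^sup>i u\<^sub>i\<close> puts every homogeneous component of \<open>u \<in> U\<close> into \<open>U\<close>.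
\<close>

lemma power_int_two_inject:
  assumes "(2::'a::field_char_0) powi i = 2 powi j"
  shows "i = j"
proof -
  have pow_eq_one: "m = 0" if "(2::'a) ^ m = 1" for m :: nat
    using that of_nat_eq_1_iff[of "2 ^ m", where 'a='a] by simp
  have "(2::'a) powi (i - j) = 1" "(2::'a) powi (j - i) = 1"
    using assms by (simp_all add: power_int_diff)
  then show ?thesis
    using pow_eq_one[of "nat (i - j)"] pow_eq_one[of "nat (j - i)"]
    by (cases "i \<le> j") (simp_all add: power_int_nonneg_exp)
qed

lemma sum_triangle_eq_sum_square:
  fixes h :: "nat \<Rightarrow> nat \<Rightarrow> 'a::comm_monoid_add"
  assumes "\<And>i j. N \<le> i + j \<Longrightarrow> h i j = 0"
  shows "(\<Sum>k<N. \<Sum>i\<le>k. h i (k - i)) = (\<Sum>i<N. \<Sum>j<N. h i j)"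
proof -
  have "(\<Sum>k<N. \<Sum>i\<le>k. h i (k - i)) = (\<Sum>(i, j)\<in>{(i, j). i + j < N}. h i j)"
    by (rule sum.triangle_reindex[symmetric])
  also have "\<dots> = (\<Sum>(i, j)\<in>{..<N} \<times> {..<N}. h i j)"
  proof (rule sum.mono_neutral_left)
    show "\<forall>p\<in>{..<N} \<times> {..<N} - {(i, j). i + j < N}. (case p of (i, j) \<Rightarrow> h i j) = 0"
      using assms[OF leI] by fastforce
  qed auto
  also have "\<dots> = (\<Sum>i<N. \<Sum>j<N. h i j)"
    by (simp add: sum.cartesian_product)
  finally show ?thesis .
qed

locale k_algebra =
  fixes emb :: "'a::field \<Rightarrow> 'b::idom"
  assumes structure_map: "structure_map emb"
begin

lemma emb_add: "emb (x + y) = emb x + emb y"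
  and emb_mult: "emb (x * y) = emb x * emb y"
  and emb_one: "emb 1 = 1"
  using structure_map by (simp_all add: structure_map_def)

sublocale emb: additive emb
  by unfold_locales (rule emb_add)

lemma emb_of_nat: "emb (of_nat n) = of_nat n"
  by (induct n) (simp_all add: emb_one emb_add emb.zero)

lemma emb_inverse_mult: "x \<noteq> 0 \<Longrightarrow> emb (inverse x) * emb x = 1"
  by (metis emb_mult emb_one left_inverse)

sublocale K: module "\<lambda>c x. emb c * x"
  by unfold_locales (simp_all add: emb_add emb_mult emb_one algebra_simps)

lemma lin_subspace_iff: "lin_subspace emb U \<longleftrightarrow> K.subspace U"
  by (simp add: lin_subspace_def K.subspace_def)

lemma alg_autI:
  assumes "bij \<phi>" "lin_map emb \<phi>" "\<And>x y. \<phi> (x * y) = \<phi> x * \<phi> y"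
  shows "alg_aut emb \<phi>"
proof -
  have "\<phi> 0 = 0" using assms(2) emb.zero by (metis lin_map_def mult_zero_left)
  then have "\<phi> 1 \<noteq> 0" using \<open>bij \<phi>\<close> by (metis bij_pointE zero_neq_one)
  moreover have "\<phi> 1 * \<phi> 1 = \<phi> 1 * 1" using assms(3)[of 1 1] by simp
  ultimately have "\<phi> 1 = 1" by simp
  with assms show ?thesis by (simp add: alg_aut_def)
qed

end

locale char_0_k_algebra = k_algebra emb for emb :: "'a::field_char_0 \<Rightarrow> 'b::idom"
begin

lemma Laurent_coeff_mem_subspace:
  assumes U: "lin_subspace emb U" and "finite S"
    and values_in_U: "\<And>t. t \<noteq> 0 \<Longrightarrow> (\<Sum>i\<in>S. emb (t powi i) * v i) \<in> U"
    and "i \<in> S"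
  shows "v i \<in> U"
  using \<open>finite S\<close> values_in_U \<open>i \<in> S\<close>
proof (induction S arbitrary: v i rule: finite_induct)
  case empty
  then show ?case by simp
next
  case (insert j S)
  have U: "K.subspace U" using U lin_subspace_iff by simp
  \<comment> \<open>Comparing the values at \<open>2 t\<close> and \<open>t\<close> cancels the coefficient at \<open>j\<close> and multiplies
    the one at \<open>i\<close> by \<open>2\<^sup>i - 2\<^sup>j\<close>, which is nonzero in characteristic zero.\<close>
  define w where "w i = emb (2 powi i - 2 powi j) * v i" for i
  have "(\<Sum>i\<in>S. emb (t powi i) * w i) \<in> U" if t: "t \<noteq> 0" for t
  proof -
    have "(\<Sum>i\<in>S. emb (t powi i) * w i) =
        (\<Sum>i\<in>insert j S. emb ((2 * t) powi i) * v i)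
        - emb (2 powi j) * (\<Sum>i\<in>insert j S. emb (t powi i) * v i)"
      using insert.hyps
      by (simp add: w_def sum_distrib_left sum_subtractf[symmetric] emb.diff emb_mult
          power_int_mult_distrib algebra_simps)
    also have "\<dots> \<in> U"
      using insert.prems(1)[of "2 * t"] insert.prems(1)[of t] t
      by (intro K.subspace_diff[OF U] K.subspace_scale[OF U]) simp_all
    finally show ?thesis .
  qed
  then have w: "w i \<in> U" if "i \<in> S" for i
    using insert.IH that by blast
  have v: "v i \<in> U" if "i \<in> S" for i
  proof -
    have "2 powi i - 2 powi j \<noteq> (0::'a)"
      using that insert.hyps(2) power_int_two_inject[of i j] by auto
    then have "v i = emb (inverse (2 powi i - 2 powi j)) * w i"
      by (simp add: w_def mult.assoc[symmetric] emb_inverse_mult)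
    with w that show ?thesis using K.subspace_scale[OF U] by simp
  qed
  have "v j = (\<Sum>i\<in>insert j S. emb (1 powi i) * v i) - (\<Sum>i\<in>S. v i)"
    using insert.hyps by (simp add: emb_one)
  also have "\<dots> \<in> U"
    using insert.prems(1)[of 1] K.subspace_sum[OF U v] by (intro K.subspace_diff[OF U]) simp_all
  finally have "v j \<in> U" .
  with v insert.prems(2) show ?case by auto
qed

end

locale graded_k_algebra = k_algebra +
  fixes A :: "int \<Rightarrow> 'b set"
  assumes Z_graded: "Z_graded_alg emb A"
begin

lemma lin_subspace_grade: "lin_subspace emb (A i)"
  and grade_mult: "x \<in> A i \<Longrightarrow> y \<in> A j \<Longrightarrow> x * y \<in> A (i + j)"
  and internal_direct_sum_grades: "internal_direct_sum UNIV A"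
  using Z_graded by (simp_all add: Z_graded_alg_def)

lemma subspace_grade: "K.subspace (A i)"
  using lin_subspace_grade lin_subspace_iff by blast

definition component :: "int \<Rightarrow> 'b \<Rightarrow> 'b" where
  "component i x =
    (SOME f. finite {i. f i \<noteq> 0} \<and> (\<forall>i. f i \<in> A i) \<and> x = (\<Sum>i\<in>{i. f i \<noteq> 0}. f i)) i"

definition grade_supp :: "'b \<Rightarrow> int set" where
  "grade_supp x = {i. component i x \<noteq> 0}"

lemma component_decomposition:
  "finite (grade_supp x) \<and> (\<forall>i. component i x \<in> A i) \<and> x = (\<Sum>i\<in>grade_supp x. component i x)"
proof -
  have "\<exists>f. finite {i. f i \<noteq> 0} \<and> (\<forall>i. f i \<in> A i) \<and> x = (\<Sum>i\<in>{i. f i \<noteq> 0}. f i)"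
    using internal_direct_sum_grades unfolding internal_direct_sum_def by blast
  from someI_ex[OF this] show ?thesis unfolding grade_supp_def component_def by blast
qed

lemma finite_grade_supp: "finite (grade_supp x)"
  and component_mem: "component i x \<in> A i"
  using component_decomposition by blast+

lemma sum_component: "finite S \<Longrightarrow> grade_supp x \<subseteq> S \<Longrightarrow> (\<Sum>i\<in>S. component i x) = x"
  by (subst sum.mono_neutral_right[of S "grade_supp x"])
    (use component_decomposition in \<open>auto simp: grade_supp_def\<close>)

lemma component_unique:
  assumes "finite S" "\<And>i. g i \<in> A i" "\<And>i. i \<notin> S \<Longrightarrow> g i = 0" "(\<Sum>i\<in>S. g i) = x"
  shows "component i x = g i"
proof -
  have unique: "\<And>f g. finite {i. f i \<noteq> 0} \<Longrightarrow> finite {i. g i \<noteq> 0}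
      \<Longrightarrow> (\<forall>i. f i \<in> A i) \<Longrightarrow> (\<forall>i. g i \<in> A i)
      \<Longrightarrow> (\<Sum>i\<in>{i. f i \<noteq> 0}. f i) = (\<Sum>i\<in>{i. g i \<noteq> 0}. g i) \<Longrightarrow> f = g"
    using internal_direct_sum_grades unfolding internal_direct_sum_def by blast
  have sub: "{i. g i \<noteq> 0} \<subseteq> S" using assms(3) by blast
  have "g = (\<lambda>i. component i x)"
  proof (rule unique)
    show "finite {i. g i \<noteq> 0}" using sub assms(1) finite_subset by blast
    show "finite {i. component i x \<noteq> 0}" using finite_grade_supp by (simp add: grade_supp_def)
    show "(\<Sum>i\<in>{i. g i \<noteq> 0}. g i) = (\<Sum>i\<in>{i. component i x \<noteq> 0}. component i x)"
      using sum.mono_neutral_left[OF assms(1) sub, of g] assms(4) component_decomposition[of x]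
      by (simp add: grade_supp_def)
  qed (use assms(2) component_mem in blast)+
  then show ?thesis by simp
qed

lemma component_add: "component i (x + y) = component i x + component i y"
proof (rule component_unique)
  show "finite (grade_supp x \<union> grade_supp y)" by (simp add: finite_grade_supp)
  show "component i x + component i y \<in> A i" for i
    by (rule K.subspace_add[OF subspace_grade component_mem component_mem])
  show "component i x + component i y = 0" if "i \<notin> grade_supp x \<union> grade_supp y" for i
    using that by (simp add: grade_supp_def)
  show "(\<Sum>i\<in>grade_supp x \<union> grade_supp y. component i x + component i y) = x + y"
    by (simp add: sum.distrib sum_component finite_grade_supp)
qed

lemma internal_direct_sum_if_component_mem:
  assumes U: "lin_subspace emb U" and component_U: "\<And>v i. v \<in> U \<Longrightarrow> component i v \<in> U"
  shows "internal_direct_sum U (\<lambda>i. U \<inter> A i)"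
proof -
  have "v \<in> U \<longleftrightarrow>
      (\<exists>f. finite {i. f i \<noteq> 0} \<and> (\<forall>i. f i \<in> U \<inter> A i) \<and> v = (\<Sum>i\<in>{i. f i \<noteq> 0}. f i))"
    (is "_ \<longleftrightarrow> (\<exists>f. ?decomp f)") for v
  proof
    assume "v \<in> U"
    then have "?decomp (\<lambda>i. component i v)"
      using component_decomposition[of v] component_U unfolding grade_supp_def by blast
    then show "\<exists>f. ?decomp f" by (rule exI[of _ "\<lambda>i. component i v"])
  next
    assume "\<exists>f. ?decomp f"
    then obtain f where "\<forall>i. f i \<in> U \<inter> A i" "v = (\<Sum>i\<in>{i. f i \<noteq> 0}. f i)" by blast
    then show "v \<in> U"
      using K.subspace_sum[of U "{i. f i \<noteq> 0}" f] U lin_subspace_iff by blast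
  qed
  with internal_direct_sum_grades show ?thesis
    unfolding internal_direct_sum_def by blast
qed

definition grade_scale :: "'a \<Rightarrow> 'b \<Rightarrow> 'b" where
  "grade_scale l x = (\<Sum>i\<in>grade_supp x. emb (l powi i) * component i x)"

lemma grade_scale_eq_sum:
  "finite S \<Longrightarrow> grade_supp x \<subseteq> S \<Longrightarrow> grade_scale l x = (\<Sum>i\<in>S. emb (l powi i) * component i x)"
  unfolding grade_scale_def by (rule sum.mono_neutral_left) (auto simp: grade_supp_def)

lemma grade_scale_add: "grade_scale l (x + y) = grade_scale l x + grade_scale l y"
proof -
  let ?S = "grade_supp x \<union> grade_supp y"
  have S: "finite ?S" by (simp add: finite_grade_supp)
  have "grade_supp (x + y) \<subseteq> ?S" by (auto simp: grade_supp_def component_add)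
  then show ?thesis
    by (simp add: grade_scale_eq_sum[OF S] component_add distrib_left sum.distrib)
qed

sublocale grade_scale: additive "grade_scale l"
  by unfold_locales (rule grade_scale_add)

lemma grade_scale_homogeneous:
  assumes "y \<in> A i"
  shows "grade_scale l y = emb (l powi i) * y"
proof -
  have component_y: "component j y = (if j = i then y else 0)" for j
    using assms by (intro component_unique[of "{i}"]) (auto simp: K.subspace_0[OF subspace_grade])
  then have "grade_supp y \<subseteq> {i}" by (auto simp: grade_supp_def)
  with component_y show ?thesis by (simp add: grade_scale_eq_sum[of "{i}"])
qed

lemma grade_scale_sum_homogeneous:
  assumes "\<And>k. k \<in> S \<Longrightarrow> g k \<in> A (deg k)"
  shows "grade_scale l (\<Sum>k\<in>S. g k) = (\<Sum>k\<in>S. emb (l powi deg k) * g k)"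
  unfolding grade_scale.sum using assms by (intro sum.cong refl grade_scale_homogeneous)

lemma grade_scale_scale: "grade_scale l (emb c * x) = emb c * grade_scale l x"
proof -
  have "emb c * x = (\<Sum>i\<in>grade_supp x. emb c * component i x)"
    by (simp add: sum_distrib_left[symmetric] sum_component finite_grade_supp)
  then have "grade_scale l (emb c * x) = (\<Sum>i\<in>grade_supp x. emb (l powi i) * (emb c * component i x))"
    using grade_scale_sum_homogeneous[of "grade_supp x" "\<lambda>i. emb c * component i x" "\<lambda>i. i" l]
      K.subspace_scale[OF subspace_grade component_mem] by simp
  also have "\<dots> = emb c * grade_scale l x"
    by (simp add: grade_scale_def sum_distrib_left mult.left_commute)
  finally show ?thesis .
qed

lemma grade_scale_grade_scale:
  assumes "l * m = 1"
  shows "grade_scale l (grade_scale m x) = x"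
proof -
  have "grade_scale l (grade_scale m x) =
      (\<Sum>i\<in>grade_supp x. emb (l powi i) * (emb (m powi i) * component i x))"
    unfolding grade_scale_def[of m]
    using grade_scale_sum_homogeneous[of "grade_supp x" "\<lambda>i. emb (m powi i) * component i x" "\<lambda>i. i" l]
      K.subspace_scale[OF subspace_grade component_mem] by simp
  also have "\<dots> = (\<Sum>i\<in>grade_supp x. component i x)"
    by (simp add: mult.assoc[symmetric] emb_mult[symmetric] power_int_mult_distrib[symmetric]
        assms emb_one)
  also have "\<dots> = x"
    by (simp add: sum_component finite_grade_supp)
  finally show ?thesis .
qed

lemma grade_scale_mult:
  assumes "l \<noteq> 0"
  shows "grade_scale l (x * y) = grade_scale l x * grade_scale l y"
proof -
  let ?P = "grade_supp x \<times> grade_supp y"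
  let ?h = "\<lambda>p. component (fst p) x * component (snd p) y"
  have "x * y = (\<Sum>i\<in>grade_supp x. component i x) * (\<Sum>j\<in>grade_supp y. component j y)"
    by (simp add: sum_component finite_grade_supp)
  also have "\<dots> = (\<Sum>p\<in>?P. ?h p)"
    by (simp add: sum_product sum.cartesian_product case_prod_beta)
  finally have "grade_scale l (x * y) = (\<Sum>p\<in>?P. emb (l powi (fst p + snd p)) * ?h p)"
    using grade_scale_sum_homogeneous[of ?P ?h "\<lambda>p. fst p + snd p" l] grade_mult component_mem
    by simp
  also have "\<dots> = (\<Sum>p\<in>?P.
      (emb (l powi fst p) * component (fst p) x) * (emb (l powi snd p) * component (snd p) y))"
    using assms by (simp add: power_int_add emb_mult algebra_simps)
  also have "\<dots> = grade_scale l x * grade_scale l y"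
    by (simp add: grade_scale_def sum_product sum.cartesian_product case_prod_beta)
  finally show ?thesis .
qed

lemma alg_aut_grade_scale:
  assumes "l \<noteq> 0"
  shows "alg_aut emb (grade_scale l)"
proof (rule alg_autI)
  show "bij (grade_scale l)"
    using assms by (intro o_bij[of "grade_scale (inverse l)"]) (auto simp: grade_scale_grade_scale)
  show "lin_map emb (grade_scale l)"
    by (simp add: lin_map_def grade_scale_add grade_scale_scale)
qed (rule grade_scale_mult[OF assms])

end

lemma (in char_0_k_algebra) internal_direct_sum_invariant_subspace:
  assumes "Z_graded_alg emb A" and U: "lin_subspace emb U"
    and invariant: "\<And>\<phi>. alg_aut emb \<phi> \<Longrightarrow> \<phi> ` U \<subseteq> U"
  shows "internal_direct_sum U (\<lambda>i. U \<inter> A i)"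
proof -
  interpret graded_k_algebra emb A
    by unfold_locales (rule assms(1))
  have "component i v \<in> U" if "v \<in> U" for v i
  proof (cases "i \<in> grade_supp v")
    case True
    have "(\<Sum>i\<in>grade_supp v. emb (t powi i) * component i v) \<in> U" if "t \<noteq> 0" for t
      using invariant[OF alg_aut_grade_scale[OF that]] \<open>v \<in> U\<close>
      unfolding grade_scale_def by blast
    then show ?thesis
      by (rule Laurent_coeff_mem_subspace[OF U finite_grade_supp _ True])
  next
    case False
    then show ?thesis using U by (simp add: grade_supp_def lin_subspace_def)
  qed
  then show ?thesis by (rule internal_direct_sum_if_component_mem[OF U])
qed

locale k_derivation = k_algebra +
  fixes D :: "'b \<Rightarrow> 'b"
  assumes derivation: "derivation emb D"
begin

lemma der_add: "D (x + y) = D x + D y"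
  and der_scale: "D (emb c * x) = emb c * D x"
  and der_mult: "D (a * b) = a * D b + b * D a"
  using derivation unfolding derivation_def lin_map_def by blast+

lemma der_of_nat_mult: "D (of_nat k * x) = of_nat k * D x"
  using der_scale[of "of_nat k" x] by (simp add: emb_of_nat)

lemma additive_iterate: "additive (D ^^ n)"
  by (induct n) (simp_all add: additive_def der_add)

lemmas iterate_add = additive.add[OF additive_iterate]
  and iterate_zero = additive.zero[OF additive_iterate]
  and iterate_sum = additive.sum[OF additive_iterate]

lemma iterate_scale: "(D ^^ n) (emb c * x) = emb c * (D ^^ n) x"
  by (induct n) (simp_all add: der_scale)

lemma iterate_eq_0_mono:
  assumes "(D ^^ n) x = 0" "n \<le> m"
  shows "(D ^^ m) x = 0"
proof -
  have "(D ^^ m) x = (D ^^ (m - n)) ((D ^^ n) x)"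
    using assms(2) funpow_add[of "m - n" n D] by simp
  with assms(1) show ?thesis by (simp add: iterate_zero)
qed

lemma iterate_mult_Leibniz:
  "(D ^^ n) (a * b) = (\<Sum>i\<le>n. of_nat (n choose i) * ((D ^^ i) a * (D ^^ (n - i)) b))"
proof (induct n)
  case 0
  then show ?case by simp
next
  case (Suc n)
  let ?X = "\<lambda>i. (D ^^ i) a" and ?Y = "\<lambda>j. (D ^^ j) b"
  define g where "g i = of_nat (n choose i) * (?X i * ?Y (Suc n - i))" for i
  have "(D ^^ Suc n) (a * b) = (\<Sum>i\<le>n. D (of_nat (n choose i) * (?X i * ?Y (n - i))))"
    using iterate_sum[of 1] by (simp add: Suc)
  also have "\<dots> = (\<Sum>i\<le>n. of_nat (n choose i) * (?X (Suc i) * ?Y (n - i)) + g i)"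
  proof (intro sum.cong refl)
    fix i assume "i \<in> {..n}"
    then have "Suc n - i = Suc (n - i)" by (simp add: Suc_diff_le)
    then show "D (of_nat (n choose i) * (?X i * ?Y (n - i))) =
        of_nat (n choose i) * (?X (Suc i) * ?Y (n - i)) + g i"
      by (subst der_of_nat_mult, subst der_mult) (simp add: g_def algebra_simps)
  qed
  also have "\<dots> = (\<Sum>i\<le>n. of_nat (n choose i) * (?X (Suc i) * ?Y (n - i))) + (\<Sum>i\<le>Suc n. g i)"
    by (simp add: sum.distrib g_def binomial_eq_0)
  also have "\<dots> = ?X 0 * ?Y (Suc n)
      + (\<Sum>i\<le>n. of_nat (Suc n choose Suc i) * (?X (Suc i) * ?Y (Suc n - Suc i)))"
    unfolding sum.atMost_Suc_shift[of g] by (simp add: g_def sum.distrib algebra_simps)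
  also have "\<dots> = (\<Sum>i\<le>Suc n. of_nat (Suc n choose i) * (?X i * ?Y (Suc n - i)))"
    by (subst sum.atMost_Suc_shift) simp
  finally show ?case .
qed

lemma iterate_mult_eq_0:
  assumes "(D ^^ m) a = 0" "(D ^^ n) b = 0"
  shows "(D ^^ (m + n)) (a * b) = 0"
  unfolding iterate_mult_Leibniz
proof (intro sum.neutral ballI)
  fix i assume "i \<in> {..m + n}"
  show "of_nat ((m + n) choose i) * ((D ^^ i) a * (D ^^ (m + n - i)) b) = 0"
    using iterate_eq_0_mono[OF assms(1), of i] iterate_eq_0_mono[OF assms(2), of "m + n - i"]
    by (cases "m \<le> i") auto
qed

end

locale locally_nilpotent_derivation = k_derivation emb D + char_0_k_algebra emb
  for emb :: "'a::field_char_0 \<Rightarrow> 'b::idom" and D :: "'b \<Rightarrow> 'b" +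
  assumes locally_nilpotent: "locally_nilpotent D"
begin

definition exp_coeff :: "'a \<Rightarrow> nat \<Rightarrow> 'b" where
  "exp_coeff t k = emb (t ^ k / fact k)"

definition exp_der :: "'a \<Rightarrow> 'b \<Rightarrow> 'b" where
  "exp_der t x = (\<Sum>k < (LEAST n. (D ^^ n) x = 0). exp_coeff t k * (D ^^ k) x)"

lemma exp_coeff_mult:
  "exp_coeff t i * exp_coeff t j = exp_coeff t (i + j) * of_nat ((i + j) choose i)"
proof -
  have "t ^ i / fact i * (t ^ j / fact j) = t ^ (i + j) / fact (i + j) * of_nat ((i + j) choose i)"
    by (simp add: binomial_fact power_add field_simps)
  then show ?thesis
    unfolding exp_coeff_def emb_mult[symmetric] emb_of_nat[symmetric] by simp
qed

lemma exp_coeff_add: "exp_coeff (s + t) k = (\<Sum>j\<le>k. exp_coeff s j * exp_coeff t (k - j))"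
proof -
  have "(s + t) ^ k / fact k = (\<Sum>j\<le>k. s ^ j / fact j * (t ^ (k - j) / fact (k - j)))"
    unfolding binomial_ring sum_divide_distrib
  proof (intro sum.cong refl)
    fix j assume "j \<in> {..k}"
    then show "of_nat (k choose j) * s ^ j * t ^ (k - j) / fact k = s ^ j / fact j * (t ^ (k - j) / fact (k - j))"
      by (simp add: binomial_fact field_simps)
  qed
  then show ?thesis
    unfolding exp_coeff_def emb.sum[symmetric] emb_mult[symmetric] by simp
qed

lemma ex_iterate_eq_0: "\<exists>n. (D ^^ n) x = 0"
  using locally_nilpotent by (simp add: locally_nilpotent_def)

lemma exp_der_eq:
  assumes "(D ^^ n) x = 0"
  shows "exp_der t x = (\<Sum>k<n. exp_coeff t k * (D ^^ k) x)"
proof -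
  let ?m = "LEAST n. (D ^^ n) x = 0"
  have "(D ^^ ?m) x = 0" "?m \<le> n"
    using assms by (auto intro: LeastI Least_le)
  then show ?thesis
    unfolding exp_der_def by (intro sum.mono_neutral_left) (auto intro: iterate_eq_0_mono)
qed

lemma exp_der_add: "exp_der t (x + y) = exp_der t x + exp_der t y"
proof -
  obtain m n where x: "(D ^^ m) x = 0" and y: "(D ^^ n) y = 0"
    using ex_iterate_eq_0 by blast
  then have x': "(D ^^ (m + n)) x = 0" and y': "(D ^^ (m + n)) y = 0"
    by (auto elim: iterate_eq_0_mono)
  then have xy: "(D ^^ (m + n)) (x + y) = 0" by (simp add: iterate_add)
  show ?thesis
    unfolding exp_der_eq[OF x'] exp_der_eq[OF y'] exp_der_eq[OF xy]
    by (simp add: iterate_add distrib_left sum.distrib)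
qed

lemma exp_der_scale: "exp_der t (emb c * x) = emb c * exp_der t x"
proof -
  obtain n where x: "(D ^^ n) x = 0" using ex_iterate_eq_0 by blast
  then have cx: "(D ^^ n) (emb c * x) = 0" by (simp add: iterate_scale)
  show ?thesis
    unfolding exp_der_eq[OF x] exp_der_eq[OF cx]
    by (simp add: iterate_scale sum_distrib_left mult.left_commute)
qed

lemma exp_der_mult: "exp_der t (a * b) = exp_der t a * exp_der t b"
proof -
  obtain m n where a: "(D ^^ m) a = 0" and b: "(D ^^ n) b = 0"
    using ex_iterate_eq_0 by blast
  let ?N = "m + n"
  let ?P = "\<lambda>i. exp_coeff t i * (D ^^ i) a" and ?Q = "\<lambda>j. exp_coeff t j * (D ^^ j) b"
  have "exp_der t (a * b) = (\<Sum>k<?N. exp_coeff t k * (D ^^ k) (a * b))"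
    by (rule exp_der_eq[OF iterate_mult_eq_0[OF a b]])
  also have "\<dots> = (\<Sum>k<?N. \<Sum>i\<le>k. ?P i * ?Q (k - i))"
    unfolding iterate_mult_Leibniz sum_distrib_left
  proof (intro sum.cong refl)
    fix k i :: nat
    assume "i \<in> {..k}"
    then have "exp_coeff t k * of_nat (k choose i) = exp_coeff t i * exp_coeff t (k - i)"
      using exp_coeff_mult[of t i "k - i"] by simp
    then show "exp_coeff t k * (of_nat (k choose i) * ((D ^^ i) a * (D ^^ (k - i)) b)) = ?P i * ?Q (k - i)"
      by (metis (no_types, lifting) mult.assoc mult.left_commute)
  qed
  also have "\<dots> = (\<Sum>i<?N. \<Sum>j<?N. ?P i * ?Q j)"
  proof (rule sum_triangle_eq_sum_square)
    fix i j assume "?N \<le> i + j"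
    then have "m \<le> i \<or> n \<le> j" by linarith
    then show "?P i * ?Q j = 0"
      using iterate_eq_0_mono[OF a, of i] iterate_eq_0_mono[OF b, of j] by auto
  qed
  also have "\<dots> = exp_der t a * exp_der t b"
    using exp_der_eq[OF iterate_eq_0_mono[OF a, of ?N]] exp_der_eq[OF iterate_eq_0_mono[OF b, of ?N]]
    by (simp add: sum_product)
  finally show ?thesis .
qed

lemma exp_der_exp_der: "exp_der s (exp_der t x) = exp_der (s + t) x"
proof -
  obtain n where x: "(D ^^ n) x = 0" using ex_iterate_eq_0 by blast
  let ?X = "\<lambda>k. (D ^^ k) x"
  have X0: "?X k = 0" if "n \<le> k" for k
    using iterate_eq_0_mono[OF x that] .
  have Dy: "(D ^^ j) (exp_der t x) = (\<Sum>i<n. exp_coeff t i * ?X (j + i))" for j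
    unfolding exp_der_eq[OF x] iterate_sum by (simp add: exp_coeff_def iterate_scale funpow_add)
  then have y: "(D ^^ n) (exp_der t x) = 0" using X0 by simp
  have "exp_der s (exp_der t x) = (\<Sum>j<n. \<Sum>i<n. exp_coeff s j * exp_coeff t i * ?X (j + i))"
    unfolding exp_der_eq[OF y] Dy by (simp add: sum_distrib_left mult.assoc)
  also have "\<dots> = (\<Sum>k<n. \<Sum>j\<le>k. exp_coeff s j * exp_coeff t (k - j) * ?X (j + (k - j)))"
    by (rule sum_triangle_eq_sum_square[symmetric]) (simp add: X0)
  also have "\<dots> = (\<Sum>k<n. exp_coeff (s + t) k * ?X k)"
    unfolding exp_coeff_add sum_distrib_right by (intro sum.cong refl) auto
  also have "\<dots> = exp_der (s + t) x"
    by (rule exp_der_eq[OF x, symmetric])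
  finally show ?thesis .
qed

lemma exp_der_0: "exp_der 0 x = x"
proof -
  obtain n where "(D ^^ n) x = 0" using ex_iterate_eq_0 by blast
  then have x: "(D ^^ Suc n) x = 0" by (rule iterate_eq_0_mono) simp
  show ?thesis
    unfolding exp_der_eq[OF x] sum.lessThan_Suc_shift by (simp add: exp_coeff_def emb.zero emb_one)
qed

lemma alg_aut_exp_der: "alg_aut emb (exp_der t)"
proof (rule alg_autI)
  show "bij (exp_der t)"
    by (rule o_bij[of "exp_der (- t)"]) (auto simp: exp_der_exp_der exp_der_0)
  show "lin_map emb (exp_der t)"
    by (simp add: lin_map_def exp_der_add exp_der_scale)
qed (rule exp_der_mult)

lemma der_mem_invariant_subspace:
  assumes U: "lin_subspace emb U" and invariant: "\<And>\<phi>. alg_aut emb \<phi> \<Longrightarrow> \<phi> ` U \<subseteq> U"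
    and "u \<in> U"
  shows "D u \<in> U"
proof -
  obtain n where "(D ^^ n) u = 0" using ex_iterate_eq_0 by blast
  then have u: "(D ^^ (n + 2)) u = 0" by (rule iterate_eq_0_mono) simp
  define v where "v i = emb (inverse (fact (nat i))) * (D ^^ nat i) u" for i :: int
  have "(\<Sum>i\<in>int ` {..<n + 2}. emb (t powi i) * v i) \<in> U" for t
  proof -
    have "(\<Sum>i\<in>int ` {..<n + 2}. emb (t powi i) * v i) = (\<Sum>k<n + 2. emb (t ^ k) * v (int k))"
      by (simp add: sum.reindex del: of_nat_add)
    also have "\<dots> = exp_der t u"
      unfolding exp_der_eq[OF u] v_def exp_coeff_def
      by (intro sum.cong refl) (simp only: nat_int divide_inverse emb_mult mult.assoc)
    also have "\<dots> \<in> U"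
      using invariant[OF alg_aut_exp_der[of t]] \<open>u \<in> U\<close> by (simp add: image_subset_iff)
    finally show ?thesis .
  qed
  moreover have "1 \<in> int ` {..<n + 2}"
    by (rule image_eqI[of _ _ 1]) simp_all
  ultimately have "v 1 \<in> U"
    by (rule Laurent_coeff_mem_subspace[OF U, rotated]) simp_all
  then show ?thesis by (simp add: v_def emb_one)
qed

end

theorem lemma3:
  fixes emb :: "'a::field_char_0 \<Rightarrow> 'b::idom" and U :: "'b set"
  assumes "alg_closed_field TYPE('a)"
    and "structure_map emb"
    and "finitely_generated_alg emb"
    and "lin_subspace emb U"
    and "\<And>\<phi>. alg_aut emb \<phi> \<Longrightarrow> \<phi> ` U \<subseteq> U"
  shows "(\<forall>D. derivation emb D \<and> locally_nilpotent D \<longrightarrow> D ` U \<subseteq> U)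
    \<and> (\<forall>A. Z_graded_alg emb A \<longrightarrow> internal_direct_sum U (\<lambda>i. U \<inter> A i))"
proof -
  interpret char_0_k_algebra emb
    by unfold_locales (rule assms(2))
  have "D ` U \<subseteq> U" if "derivation emb D" "locally_nilpotent D" for D
  proof -
    interpret locally_nilpotent_derivation emb D
      by unfold_locales (use assms(2) that in auto)
    show ?thesis
      using der_mem_invariant_subspace[OF assms(4,5)] by blast
  qed
  then show ?thesis
    using internal_direct_sum_invariant_subspace[OF _ assms(4,5)] by blast
qed

end
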